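(* Let $A$ be a nontrivial closed class of decision tables from $\mathcal M_2^\infty$, $\psi$ a bounded complexity measure, $n\in\omega$, $T\in A_\psi(n)$, and suppose $G(T)>0$. Then there exists a decision table $T^*\in[T]$ such that $\psi^a(T^* )\le n$ and $\psi^d(T^* )\ge G(T)-1$.
   Context: Notation: $\omega=\{0,1,2,\dots\}$; $\mathcal P(\omega)$ is the set of nonempty finite subsets of $\omega$; $E_2=\{0,1\}$. $P=\{f_i:i\in\omega\}$ is a set of attributes, $f_i\neq f_j$ for $i\ne j$. Decision tables: $\mathcal M_2^\infty$ is the set of rectangular tables filled with numbers from $E_2$, whose columns are labeled with pairwise different attributes from $P$, whose rows are pairwise different, and each row of which is labeled with a set from $\mathcal P(\omega)$ (its set of decisions). The empty table (no rows) is denoted $\Lambda$ and belongs to $\mathcal M_2^\infty$. For $T\in\mathcal M_2^\infty$: $\Pi(T)$ is the intersection of the decision sets of all rows (common decisions); $\mathrm{At}(T)$ is the set of attributes labeling columns. For nonempty $T$, $\Omega_2(T)$ is the set of finite words (including the empty word $\lambda$) over the alphabet $\{(f_i,\delta):f_i\in\mathrm{At}(T),\delta\in E_2\}$; for $\alpha=(f_{i_1},\delta_1)\cdots(f_{i_m},\delta_m)$, $T\alpha$ is the subtable of $T$ consisting of the rows having value $\delta_j$ in the column $f_{i_j}$ for all $j$, and $T\lambda=T$. Operations: for $D\subseteq\mathrm{At}(T)$, $I(D,T)$ is obtained from $T$ by deleting the columns labeled with attributes from $D$ and, in each group of rows coinciding on the remaining columns, keeping only the first row; $I(\mathrm{At}(T),T)=\Lambda$.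 For $\nu:E_2^{|\mathrm{At}(T)|}\to\mathcal P(\omega)$, $J(\nu,T)$ is obtained by replacing the decision set of each row $\bar\delta$ by $\nu(\bar\delta)$. $[T]=\{J(\nu,I(D,T)):D\subseteq\mathrm{At}(T),\ \nu:E_2^{|\mathrm{At}(T)\setminus D|}\to\mathcal P(\omega)\}$; for nonempty $A\subseteq\mathcal M_2^\infty$, $[A]=\bigcup_{T\in A}[T]$. $A$ is a closed class if $[A]=A$; nontrivial if it contains a nonempty table. Decision trees: a $2$-decision tree is a finite directed rooted tree with at least two nodes in which the root and the edges leaving the root are unlabeled, each terminal node is labeled with a decision from $\omega$, and each other node is labeled with an attribute from $P$, each edge leaving such a node being labeled with a number from $E_2$. $\mathrm{At}(\Gamma)$ is the set of attributes labeling nodes of $\Gamma$. For a complete path $\tau=v_1,d_1,\dots,v_m,d_m,v_{m+1}$ (from the root to a terminal node), $\pi(\tau)=\lambda$ if $m=1$, and otherwise $\pi(\tau)=(f_{i_2},\delta_2)\cdots(f_{i_m},\delta_m)$ where $v_j$ is labeled $f_{i_j}$ and $d_j$ is labeled $\delta_j$; $T(\tau)=T\pi(\tau)$. For $T\ne\Lambda$, a nondeterministic decision tree for $T$ is a $2$-decision tree $\Gamma$ with $\mathrm{At}(\Gamma)\subseteq\mathrm{At}(T)$ such that every row of $T$ belongs to $T(\tau)$ for some complete path $\tau$, and for every complete path $\tau$ either $T(\tau)=\Lambda$ or the decision at the terminal node of $\tau$ belongs to $\Pi(T(\tau))$. A deterministic decision tree for $T$ is a nondeterministic decision tree for $T$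 in which, additionally, exactly one edge leaves the root and the edges leaving any node that is neither the root nor terminal are labeled with pairwise different numbers. Complexity measures: a partially bounded complexity measure is a function $\psi:P^*\to\omega$ on finite words over $P$ such that for all words $\alpha_1,\alpha_2$: $\psi(\alpha_1)=0$ iff $\alpha_1=\lambda$; $\psi(\alpha_1)$ is invariant under permutation of letters; $\psi(\alpha_1)\le\psi(\alpha_1\alpha_2)$; $\psi(\alpha_1\alpha_2)\le\psi(\alpha_1)+\psi(\alpha_2)$. It is bounded if in addition $\psi(\alpha)\ge|\alpha|$ for all $\alpha$. $\psi$ is extended to words $(f_{i_1},\delta_1)\cdots(f_{i_m},\delta_m)$ by $\psi(f_{i_1}\cdots f_{i_m})$ ($\psi(\lambda)=0$). For a $2$-decision tree $\Gamma$, $\psi(\Gamma)=\max_\tau\psi(\pi(\tau))$ over complete paths. For $T\ne\Lambda$, $\psi^d(T)$ (resp. $\psi^a(T)$) is the minimum of $\psi(\Gamma)$ over deterministic (resp. nondeterministic) decision trees $\Gamma$ for $T$; $\psi^d(\Lambda)=\psi^a(\Lambda)=0$. Parameters: $m_\psi(T)=\max\{\psi(f_i):f_i\in\mathrm{At}(T)\}$, $m_\psi(\Lambda)=0$; $A_\psi(n)=\{T\in A:m_\psi(T)\le n\}$. A word $\alpha\in\Omega_2(T)$ is annihilating for $T$ if $T\alpha=\Lambda$ and $\alpha$ contains no two letters $(f_i,\delta),(f_i,\sigma)$ with $\delta\ne\sigma$; it is irreducible if no word obtained from $\alpha$ by deleting some (at least one) letters is annihilating for $T$; $G(T)$ is the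 maximum length of an irreducible annihilating word for $T$ if one exists, and $0$ otherwise; $G(\Lambda)=0$. *)

theory Defs
  imports Main "HOL-Library.Multiset"
begin

text \<open>Attribute f_i is represented by the natural number i; E_2 = {0,1} is represented
by bool (False = 0, True = 1). A table is a pair (columns, rows): the list of
column attributes, and the list of rows, each row being a list of values (aligned with
the columns) together with its set of decisions.\<close>

type_synonym dtable = "nat list \<times> (bool list \<times> nat set) list"

definition cols :: "dtable \<Rightarrow> nat list" where "cols T = fst T"
definition rows :: "dtable \<Rightarrow> (bool list \<times> nat set) list" where "rows T = snd T"

definition Lambda :: dtable where "Lambda = ([], [])"

text \<open>Membership in M_2^infinity: pairwise different column attributes, rectangular,
pairwise different rows, decision sets nonempty finite; a table has no rows iff it is
the empty table Lambda.\<close>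
definition wf_table :: "dtable \<Rightarrow> bool" where
  "wf_table T \<longleftrightarrow> distinct (cols T)
     \<and> (\<forall>(r, d) \<in> set (rows T). length r = length (cols T) \<and> finite d \<and> d \<noteq> {})
     \<and> distinct (map fst (rows T))
     \<and> (rows T = [] \<longleftrightarrow> cols T = [])"

definition At :: "dtable \<Rightarrow> nat set" where "At T = set (cols T)"

definition Pi_dec :: "dtable \<Rightarrow> nat set" where
  "Pi_dec T = (\<Inter>(r, d) \<in> set (rows T). d)"

definition row_val :: "nat list \<Rightarrow> bool list \<Rightarrow> nat \<Rightarrow> bool" where
  "row_val cs r i = the (map_of (zip cs r) i)"

text \<open>Words over {(f_i,delta)} are lists of pairs (i, delta).\<close>
definition row_sat :: "nat list \<Rightarrow> bool list \<Rightarrow> (nat \<times> bool) list \<Rightarrow> bool" where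
  "row_sat cs r \<alpha> \<longleftrightarrow> (\<forall>(i, \<delta>) \<in> set \<alpha>. row_val cs r i = \<delta>)"

definition Omega2 :: "dtable \<Rightarrow> (nat \<times> bool) list set" where
  "Omega2 T = {\<alpha>. set (map fst \<alpha>) \<subseteq> At T}"

definition subtable :: "dtable \<Rightarrow> (nat \<times> bool) list \<Rightarrow> dtable" where
  "subtable T \<alpha> =
    (let rs = filter (\<lambda>(r, d). row_sat (cols T) r \<alpha>) (rows T)
     in if rs = [] then Lambda else (cols T, rs))"

definition I_op :: "nat set \<Rightarrow> dtable \<Rightarrow> dtable" where
  "I_op D T =
    (if At T \<subseteq> D then Lambda else
      (let cs = cols T; rs = rows T;
           cs' = filter (\<lambda>i. i \<notin> D) cs;
           proj = (\<lambda>r. map (row_val cs r) cs');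
           keep = filter (\<lambda>k. \<forall>j<k. proj (fst (rs ! j)) \<noteq> proj (fst (rs ! k))) [0..<length rs]
       in (cs', map (\<lambda>k. (proj (fst (rs ! k)), snd (rs ! k))) keep)))"

definition J_op :: "(bool list \<Rightarrow> nat set) \<Rightarrow> dtable \<Rightarrow> dtable" where
  "J_op \<nu> T = (cols T, map (\<lambda>(r, d). (r, \<nu> r)) (rows T))"

definition closure_table :: "dtable \<Rightarrow> dtable set" where
  "closure_table T = {J_op \<nu> (I_op D T) | D \<nu>.
      D \<subseteq> At T \<and> (\<forall>x. length x = card (At T - D) \<longrightarrow> finite (\<nu> x) \<and> \<nu> x \<noteq> {})}"

definition closure_class :: "dtable set \<Rightarrow> dtable set" where
  "closure_class A = (\<Union>T \<in> A. closure_table T)"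

definition closed_class :: "dtable set \<Rightarrow> bool" where
  "closed_class A \<longleftrightarrow> A \<noteq> {} \<and> (\<forall>T \<in> A. wf_table T) \<and> closure_class A = A"

definition nontrivial :: "dtable set \<Rightarrow> bool" where
  "nontrivial A \<longleftrightarrow> (\<exists>T \<in> A. T \<noteq> Lambda)"

text \<open>A tree is the
list of subtrees hanging below the (unlabelled) root via unlabelled edges.\<close>

datatype node = Leaf nat | Node nat "(bool \<times> node) list"

type_synonym dtree = "node list"

inductive wf_node :: "node \<Rightarrow> bool" where
  "wf_node (Leaf d)"
| "cs \<noteq> [] \<Longrightarrow> (\<And>\<delta> c. (\<delta>, c) \<in> set cs \<Longrightarrow> wf_node c) \<Longrightarrow> wf_node (Node i cs)"

definition wf_tree :: "dtree \<Rightarrow> bool" where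
  "wf_tree \<Gamma> \<longleftrightarrow> \<Gamma> \<noteq> [] \<and> (\<forall>c \<in> set \<Gamma>. wf_node c)"

inductive det_node :: "node \<Rightarrow> bool" where
  "det_node (Leaf d)"
| "distinct (map fst cs) \<Longrightarrow> (\<And>\<delta> c. (\<delta>, c) \<in> set cs \<Longrightarrow> det_node c) \<Longrightarrow> det_node (Node i cs)"

inductive attr_in :: "node \<Rightarrow> nat \<Rightarrow> bool" where
  "attr_in (Node i cs) i"
| "(\<delta>, c) \<in> set cs \<Longrightarrow> attr_in c j \<Longrightarrow> attr_in (Node i cs) j"

definition tree_At :: "dtree \<Rightarrow> nat set" where
  "tree_At \<Gamma> = {j. \<exists>c \<in> set \<Gamma>. attr_in c j}"

inductive node_path :: "node \<Rightarrow> (nat \<times> bool) list \<Rightarrow> nat \<Rightarrow> bool" where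
  "node_path (Leaf d) [] d"
| "(\<delta>, c) \<in> set cs \<Longrightarrow> node_path c w d \<Longrightarrow> node_path (Node i cs) ((i, \<delta>) # w) d"

text \<open>Complete paths tau of a tree, given by pi(tau) and the terminal decision.\<close>
definition tree_path :: "dtree \<Rightarrow> (nat \<times> bool) list \<Rightarrow> nat \<Rightarrow> bool" where
  "tree_path \<Gamma> w d \<longleftrightarrow> (\<exists>c \<in> set \<Gamma>. node_path c w d)"

definition is_ndt :: "dtable \<Rightarrow> dtree \<Rightarrow> bool" where
  "is_ndt T \<Gamma> \<longleftrightarrow> T \<noteq> Lambda \<and> wf_tree \<Gamma> \<and> tree_At \<Gamma> \<subseteq> At T
     \<and> (\<forall>r \<in> set (rows T). \<exists>w d. tree_path \<Gamma> w d \<and> r \<in> set (rows (subtable T w)))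
     \<and> (\<forall>w d. tree_path \<Gamma> w d \<longrightarrow> subtable T w = Lambda \<or> d \<in> Pi_dec (subtable T w))"

definition is_ddt :: "dtable \<Rightarrow> dtree \<Rightarrow> bool" where
  "is_ddt T \<Gamma> \<longleftrightarrow> is_ndt T \<Gamma> \<and> length \<Gamma> = 1 \<and> (\<forall>c \<in> set \<Gamma>. det_node c)"

definition partially_bounded_measure :: "(nat list \<Rightarrow> nat) \<Rightarrow> bool" where
  "partially_bounded_measure \<psi> \<longleftrightarrow>
     (\<forall>a. \<psi> a = 0 \<longleftrightarrow> a = [])
   \<and> (\<forall>a b. mset a = mset b \<longrightarrow> \<psi> a = \<psi> b)
   \<and> (\<forall>a b. \<psi> a \<le> \<psi> (a @ b))
   \<and> (\<forall>a b. \<psi> (a @ b) \<le> \<psi> a + \<psi> b)"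

definition bounded_measure :: "(nat list \<Rightarrow> nat) \<Rightarrow> bool" where
  "bounded_measure \<psi> \<longleftrightarrow> partially_bounded_measure \<psi> \<and> (\<forall>a. length a \<le> \<psi> a)"

definition psi_tree :: "(nat list \<Rightarrow> nat) \<Rightarrow> dtree \<Rightarrow> nat" where
  "psi_tree \<psi> \<Gamma> = Max {\<psi> (map fst w) | w d. tree_path \<Gamma> w d}"

definition psi_d :: "(nat list \<Rightarrow> nat) \<Rightarrow> dtable \<Rightarrow> nat" where
  "psi_d \<psi> T = (if T = Lambda then 0 else Inf {psi_tree \<psi> \<Gamma> | \<Gamma>. is_ddt T \<Gamma>})"

definition psi_a :: "(nat list \<Rightarrow> nat) \<Rightarrow> dtable \<Rightarrow> nat" where
  "psi_a \<psi> T = (if T = Lambda then 0 else Inf {psi_tree \<psi> \<Gamma> | \<Gamma>. is_ndt T \<Gamma>})"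

definition m_psi :: "(nat list \<Rightarrow> nat) \<Rightarrow> dtable \<Rightarrow> nat" where
  "m_psi \<psi> T = (if At T = {} then 0 else Max ((\<lambda>i. \<psi> [i]) ` At T))"

definition A_psi :: "dtable set \<Rightarrow> (nat list \<Rightarrow> nat) \<Rightarrow> nat \<Rightarrow> dtable set" where
  "A_psi A \<psi> n = {T \<in> A. m_psi \<psi> T \<le> n}"

definition annihilating :: "dtable \<Rightarrow> (nat \<times> bool) list \<Rightarrow> bool" where
  "annihilating T \<alpha> \<longleftrightarrow> \<alpha> \<in> Omega2 T \<and> subtable T \<alpha> = Lambda
     \<and> \<not> (\<exists>i \<delta> \<sigma>. (i, \<delta>) \<in> set \<alpha> \<and> (i, \<sigma>) \<in> set \<alpha> \<and> \<delta> \<noteq> \<sigma>)"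

text \<open>Words obtained by deleting at least one letter are the proper subsequences.\<close>
definition irreducible_ann :: "dtable \<Rightarrow> (nat \<times> bool) list \<Rightarrow> bool" where
  "irreducible_ann T \<alpha> \<longleftrightarrow> annihilating T \<alpha>
     \<and> \<not> (\<exists>\<beta> \<in> set (subseqs \<alpha>). length \<beta> < length \<alpha> \<and> annihilating T \<beta>)"

definition G :: "dtable \<Rightarrow> nat" where
  "G T = (if T = Lambda then 0
          else if \<exists>\<alpha>. irreducible_ann T \<alpha> then Max {length \<alpha> | \<alpha>. irreducible_ann T \<alpha>}
          else 0)"

end

theory Submission
  imports Defs
begin

text \<open>Take an irreducible annihilating word \<alpha> of maximal length G T and let K be its set of
  attributes. Deleting the columns outside K and giving each row the set of attributes of K at
  which it disagrees with \<alpha> produces a table T' in [T]. Since \<alpha> annihilates T, every row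
  disagrees somewhere, so the nondeterministic tree that queries each f_k (k \<in> K) separately and
  outputs k on a disagreement is correct, and its complexity is at most max \<psi>(f_k) \<le> n.
  Irreducibility gives, for every k \<in> K, a row disagreeing with \<alpha> exactly at k, whose only
  decision is k. A deterministic tree answered according to \<alpha> cannot output a decision before it
  has queried all but one attribute of K, so its depth, and hence its \<psi>-complexity, is at least
  |K| - 1 = G T - 1.\<close>

lemma filter_in_subseqs: "filter P xs \<in> set (subseqs xs)"
  by (induction xs) (auto simp: Let_def)

lemma remdups_in_subseqs: "remdups xs \<in> set (subseqs xs)"
  by (induction xs) (auto simp: Let_def)

lemma rows_subtable: "set (rows (subtable T w)) = {p \<in> set (rows T). row_sat (cols T) (fst p) w}"
  by (auto simp: subtable_def Let_def rows_def Lambda_def split_def filter_empty_conv)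

lemma subtable_eq_Lambda_iff: "subtable T w = Lambda \<longleftrightarrow> (\<forall>p\<in>set (rows T). \<not> row_sat (cols T) (fst p) w)"
  by (auto simp: subtable_def Let_def rows_def Lambda_def split_def filter_empty_conv)

lemma subtable_cong_set: "set \<alpha> = set \<beta> \<Longrightarrow> subtable T \<alpha> = subtable T \<beta>"
  by (simp add: subtable_def row_sat_def)

lemma mem_Pi_dec_iff: "d \<in> Pi_dec X \<longleftrightarrow> (\<forall>p\<in>set (rows X). d \<in> snd p)"
  by (auto simp: Pi_dec_def)

lemma row_val_map: "i \<in> set cs \<Longrightarrow> row_val cs (map f cs) i = f i"
  by (simp add: row_val_def map_of_zip_map)

lemma row_val_nth: "length x = length cs \<Longrightarrow> distinct cs \<Longrightarrow> j < length cs \<Longrightarrow> row_val cs x (cs ! j) = x ! j"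
  by (simp add: row_val_def map_of_zip_nth)

lemma row_sat_zip: "length x = length cs \<Longrightarrow> distinct cs \<Longrightarrow> row_sat cs x (zip cs x)"
  by (auto simp: row_sat_def set_zip row_val_nth)

lemma row_sat_zip_imp_eq:
  assumes "length x = length cs" "length y = length cs" "distinct cs" "row_sat cs y (zip cs x)"
  shows "y = x"
proof (rule nth_equalityI)
  show "length y = length x" using assms by simp
  fix j assume "j < length y"
  then have "(cs ! j, x ! j) \<in> set (zip cs x)" using assms by (auto simp: set_zip)
  then have "row_val cs y (cs ! j) = x ! j" using assms(4) by (auto simp: row_sat_def)
  then show "y ! j = x ! j" using assms \<open>j < length y\<close> by (simp add: row_val_nth)
qed

lemma cols_I_op: "\<not> At T \<subseteq> D \<Longrightarrow> cols (I_op D T) = filter (\<lambda>i. i \<notin> D) (cols T)"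
  by (simp add: I_op_def Let_def cols_def)

lemma fst_rows_I_op:
  assumes "\<not> At T \<subseteq> D"
  shows "fst ` set (rows (I_op D T)) = (\<lambda>r. map (row_val (cols T) r) (cols (I_op D T))) ` fst ` set (rows T)"
proof -
  define rs where "rs = rows T"
  define proj where "proj = (\<lambda>r. map (row_val (cols T) r) (cols (I_op D T)))"
  define first where "first = (\<lambda>k. \<forall>j<k. proj (fst (rs ! j)) \<noteq> proj (fst (rs ! k)))"
  have "fst ` set (rows (I_op D T)) = (\<lambda>k. proj (fst (rs ! k))) ` {k. k < length rs \<and> first k}"
    using assms unfolding I_op_def Let_def rs_def proj_def first_def
    by (auto simp: rows_def cols_def image_image)
  also have "\<dots> = proj ` fst ` set rs"
  proof
    show "proj ` fst ` set rs \<subseteq> (\<lambda>k. proj (fst (rs ! k))) ` {k. k < length rs \<and> first k}"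
    proof
      fix y assume "y \<in> proj ` fst ` set rs"
      then obtain k where k: "k < length rs" "y = proj (fst (rs ! k))" by (auto simp: in_set_conv_nth)
      define r where "r = fst (rs ! k)"
      define j where "j = (LEAST j. proj (fst (rs ! j)) = proj r)"
      have "proj (fst (rs ! j)) = proj r" unfolding j_def by (rule LeastI[of _ k]) (simp add: r_def)
      moreover have "j \<le> k" unfolding j_def by (rule Least_le) (simp add: r_def)
      moreover have "first j" unfolding first_def
        using calculation(1) unfolding j_def by (metis (full_types) not_less_Least)
      ultimately show "y \<in> (\<lambda>k. proj (fst (rs ! k))) ` {k. k < length rs \<and> first k}"
        using k by (intro image_eqI[of _ _ j]) (auto simp: r_def)
    qed
  qed (auto simp: image_image)
  finally show ?thesis by (simp add: rs_def proj_def)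
qed

lemma cols_J_op: "cols (J_op \<nu> X) = cols X"
  by (simp add: J_op_def cols_def)

lemma rows_J_op: "set (rows (J_op \<nu> X)) = (\<lambda>x. (x, \<nu> x)) ` fst ` set (rows X)"
  by (force simp: J_op_def rows_def)

lemma node_path_Leaf_iff [simp]: "node_path (Leaf e) w d \<longleftrightarrow> w = [] \<and> d = e"
  by (auto elim: node_path.cases intro: node_path.intros)

lemma node_path_Node_iff [simp]:
  "node_path (Node i cs) w d \<longleftrightarrow> (\<exists>\<delta> c w'. w = (i, \<delta>) # w' \<and> (\<delta>, c) \<in> set cs \<and> node_path c w' d)"
  by (blast elim: node_path.cases intro: node_path.intros)

lemma attr_in_Leaf_iff [simp]: "attr_in (Leaf e) j \<longleftrightarrow> False"
  by (auto elim: attr_in.cases)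

lemma attr_in_Node_iff [simp]:
  "attr_in (Node i cs) j \<longleftrightarrow> j = i \<or> (\<exists>\<delta> c. (\<delta>, c) \<in> set cs \<and> attr_in c j)"
  by (auto elim: attr_in.cases intro: attr_in.intros)

lemma wf_node_Node_iff [simp]:
  "wf_node (Node i cs) \<longleftrightarrow> cs \<noteq> [] \<and> (\<forall>(\<delta>, c) \<in> set cs. wf_node c)"
  by (auto elim: wf_node.cases intro: wf_node.intros)

lemma det_node_Node_iff [simp]:
  "det_node (Node i cs) \<longleftrightarrow> distinct (map fst cs) \<and> (\<forall>(\<delta>, c) \<in> set cs. det_node c)"
  by (auto elim: det_node.cases intro: det_node.intros)

lemma wf_node_ex_path: "wf_node c \<Longrightarrow> \<exists>w d. node_path c w d"
proof (induction rule: wf_node.induct)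
  case (2 cs i)
  then obtain \<delta> c where "(\<delta>, c) \<in> set cs" by (metis list.set_sel(1) surj_pair)
  with 2 show ?case by fastforce
qed simp

lemma finite_node_paths: "wf_node c \<Longrightarrow> finite {(w, d). node_path c w d}"
proof (induction rule: wf_node.induct)
  case (1 d)
  then show ?case by simp
next
  case (2 cs i)
  have "{(w, d). node_path (Node i cs) w d} \<subseteq>
     (\<Union>(\<delta>, c)\<in>set cs. (\<lambda>(w, d). ((i, \<delta>) # w, d)) ` {(w, d). node_path c w d})"
    by force
  moreover have "finite (\<Union>(\<delta>, c)\<in>set cs. (\<lambda>(w, d). ((i, \<delta>) # w, d)) ` {(w, d). node_path c w d})"
    using 2(3) by auto
  ultimately show ?case by (rule finite_subset)
qed

lemma finite_psi_paths: "wf_tree \<Gamma> \<Longrightarrow> finite {\<psi> (map fst w) | w d. tree_path \<Gamma> w d}"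
proof -
  assume "wf_tree \<Gamma>"
  then have "finite (\<Union>c\<in>set \<Gamma>. {(w, d). node_path c w d})"
    by (auto simp: wf_tree_def finite_node_paths)
  moreover have "{\<psi> (map fst w) | w d. tree_path \<Gamma> w d} \<subseteq>
     (\<lambda>(w, d). \<psi> (map fst w)) ` (\<Union>c\<in>set \<Gamma>. {(w, d). node_path c w d})"
    by (auto simp: tree_path_def)
  ultimately show ?thesis by (meson finite_imageI finite_subset)
qed

lemma le_psi_tree: "wf_tree \<Gamma> \<Longrightarrow> tree_path \<Gamma> w d \<Longrightarrow> \<psi> (map fst w) \<le> psi_tree \<psi> \<Gamma>"
  unfolding psi_tree_def by (rule Max_ge[OF finite_psi_paths]) auto

lemma psi_tree_leI:
  assumes "wf_tree \<Gamma>" "\<And>w d. tree_path \<Gamma> w d \<Longrightarrow> \<psi> (map fst w) \<le> n"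
  shows "psi_tree \<psi> \<Gamma> \<le> n"
proof -
  obtain c where "c \<in> set \<Gamma>" "wf_node c" using assms(1) unfolding wf_tree_def by (meson list.set_sel(1))
  then obtain w d where "tree_path \<Gamma> w d" using wf_node_ex_path unfolding tree_path_def by blast
  then show ?thesis unfolding psi_tree_def
    by (intro Max.boundedI[OF finite_psi_paths[OF assms(1)]]) (auto intro: assms(2))
qed

lemma psi_a_le_psi_tree: "is_ndt X \<Gamma> \<Longrightarrow> psi_a \<psi> X \<le> psi_tree \<psi> \<Gamma>"
  by (auto simp: psi_a_def is_ndt_def intro: wellorder_Inf_le1)

lemma le_psi_d:
  assumes "X \<noteq> Lambda" "is_ddt X \<Gamma>0" "\<And>\<Gamma>. is_ddt X \<Gamma> \<Longrightarrow> m \<le> psi_tree \<psi> \<Gamma>"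
  shows "m \<le> psi_d \<psi> X"
  unfolding psi_d_def using assms by (auto intro!: cInf_greatest)

text \<open>The third argument records the word read on the way down, so the leaf reached by a
  complete word w carries the decision p w.\<close>
fun full_tree :: "((nat \<times> bool) list \<Rightarrow> nat) \<Rightarrow> nat list \<Rightarrow> (nat \<times> bool) list \<Rightarrow> node" where
  "full_tree p [] w = Leaf (p w)"
| "full_tree p (i # is) w =
     Node i [(False, full_tree p is (w @ [(i, False)])), (True, full_tree p is (w @ [(i, True)]))]"

lemma wf_node_full_tree: "wf_node (full_tree p is w)"
  by (induction "is" arbitrary: w) (auto intro: wf_node.intros)

lemma det_node_full_tree: "det_node (full_tree p is w)"
  by (induction "is" arbitrary: w) (auto intro: det_node.intros)

lemma attr_in_full_tree: "attr_in (full_tree p is w) j \<Longrightarrow> j \<in> set is"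
  by (induction "is" arbitrary: w) auto

lemma node_path_full_tree_iff:
  "node_path (full_tree p is w0) w d \<longleftrightarrow> (\<exists>bs. length bs = length is \<and> w = zip is bs \<and> d = p (w0 @ w))"
proof (induction "is" arbitrary: w0 w)
  case (Cons i "is")
  have "node_path (full_tree p (i # is) w0) w d \<longleftrightarrow>
      (\<exists>b w'. w = (i, b) # w' \<and> node_path (full_tree p is (w0 @ [(i, b)])) w' d)"
    by (auto simp: all_bool_eq) (metis (full_types))
  also have "\<dots> \<longleftrightarrow> (\<exists>bs. length bs = length (i # is) \<and> w = zip (i # is) bs \<and> d = p (w0 @ w))"
    by (auto simp: Cons.IH length_Suc_conv) (metis zip_Cons_Cons)
  finally show ?case .
qed auto

lemma ex_is_ddt:
  assumes "X \<noteq> Lambda" "distinct (cols X)"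
    and "\<forall>(x, d) \<in> set (rows X). length x = length (cols X) \<and> d \<noteq> {}"
    and "\<forall>p \<in> set (rows X). \<forall>q \<in> set (rows X). fst p = fst q \<longrightarrow> snd p = snd q"
  shows "\<exists>\<Gamma>. is_ddt X \<Gamma>"
proof -
  define c where "c = full_tree (\<lambda>w. SOME d. d \<in> Pi_dec (subtable X w)) (cols X) []"
  have paths: "tree_path [c] w d \<longleftrightarrow> (\<exists>bs. length bs = length (cols X) \<and> w = zip (cols X) bs
      \<and> d = (SOME d. d \<in> Pi_dec (subtable X w)))" for w d
    by (simp add: tree_path_def c_def node_path_full_tree_iff)
  have "r \<in> set (rows (subtable X (zip (cols X) (fst r))))" if "r \<in> set (rows X)" for r
    using that assms(2,3) row_sat_zip[of "fst r" "cols X"] by (auto simp: rows_subtable)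
  then have cover: "\<forall>r \<in> set (rows X). \<exists>w d. tree_path [c] w d \<and> r \<in> set (rows (subtable X w))"
    using assms(3) by (fastforce simp: paths)
  have "d \<in> Pi_dec (subtable X w)" if path: "tree_path [c] w d" and nonempty: "subtable X w \<noteq> Lambda" for w d
  proof -
    obtain bs where bs: "length bs = length (cols X)" "w = zip (cols X) bs"
      and d: "d = (SOME d. d \<in> Pi_dec (subtable X w))"
      using path unfolding paths by blast
    obtain p where p: "p \<in> set (rows X)" "row_sat (cols X) (fst p) w"
      using nonempty by (auto simp: subtable_eq_Lambda_iff)
    have "fst q = bs" if "q \<in> set (rows X)" "row_sat (cols X) (fst q) w" for q
      using row_sat_zip_imp_eq[OF bs(1), of "fst q"] that assms(2,3) bs(2) by auto
    then have "snd q = snd p" if "q \<in> set (rows X)" "row_sat (cols X) (fst q) w" for q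
      using that p assms(4) by metis
    moreover obtain e where "e \<in> snd p" using p(1) assms(3) by fastforce
    ultimately have "e \<in> Pi_dec (subtable X w)" by (auto simp: mem_Pi_dec_iff rows_subtable)
    then show ?thesis unfolding d by (rule someI)
  qed
  then have "is_ddt X [c]"
    using assms(1) cover
    by (auto simp: is_ddt_def is_ndt_def wf_tree_def tree_At_def At_def c_def
        wf_node_full_tree det_node_full_tree dest: attr_in_full_tree)
  then show ?thesis by blast
qed

text \<open>Adversary argument: row x k agrees with the answers a except at attribute k. Answering
  a i at every node where this is possible yields a path consistent with every such row whose
  exceptional attribute is not queried on it.\<close>
lemma det_node_adversary_path:
  assumes "det_node c" "wf_node c"
    and "\<forall>k\<in>U. \<forall>i. attr_in c i \<longrightarrow> (row_val cs (x k) i = a i \<longleftrightarrow> i \<noteq> k)"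
    and "\<forall>k\<in>U. \<exists>w d. node_path c w d \<and> row_sat cs (x k) w"
  shows "\<exists>w d. node_path c w d \<and> (\<forall>k\<in>U - fst ` set w. row_sat cs (x k) w)"
  using assms
proof (induction c arbitrary: U rule: det_node.induct)
  case (1 d)
  then show ?case by auto
next
  case (2 cs' i)
  have a_i: "row_val cs (x k) i = a i \<longleftrightarrow> k \<noteq> i" if "k \<in> U" for k
    using "2.prems"(2) that by auto
  show ?case
  proof (cases "\<exists>c. (a i, c) \<in> set cs'")
    case True
    then obtain c where c: "(a i, c) \<in> set cs'" by blast
    have "\<exists>w d. node_path c w d \<and> row_sat cs (x k) w" if k: "k \<in> U - {i}" for k
    proof -
      obtain \<delta> c' w d where path: "(\<delta>, c') \<in> set cs'" "node_path c' w d"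
        and sat: "row_sat cs (x k) ((i, \<delta>) # w)"
        using "2.prems"(3) k by (simp, blast)
      then have "\<delta> = a i" using a_i k by (auto simp: row_sat_def)
      then have "c' = c" using eq_key_imp_eq_value[OF "2.hyps"(1)] path(1) c by blast
      then show ?thesis using path(2) sat by (auto simp: row_sat_def)
    qed
    moreover have "wf_node c" using "2.prems"(1) c by auto
    moreover have "\<forall>k\<in>U - {i}. \<forall>j. attr_in c j \<longrightarrow> (row_val cs (x k) j = a j \<longleftrightarrow> j \<noteq> k)"
      using "2.prems"(2) c by auto
    ultimately obtain w d where w: "node_path c w d" "\<forall>k\<in>U - {i} - fst ` set w. row_sat cs (x k) w"
      using "2.IH"[OF c, of "U - {i}"] by blast
    have "node_path (Node i cs') ((i, a i) # w) d" using c w(1) by auto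
    moreover have "\<forall>k\<in>U - fst ` set ((i, a i) # w). row_sat cs (x k) ((i, a i) # w)"
      using w(2) a_i by (auto simp: row_sat_def)
    ultimately show ?thesis by blast
  next
    case False
    have "U \<subseteq> {i}"
    proof
      fix k assume "k \<in> U"
      then obtain \<delta> c' w where "(\<delta>, c') \<in> set cs'" "row_sat cs (x k) ((i, \<delta>) # w)"
        using "2.prems"(3) by (simp, blast)
      then show "k \<in> {i}" using False a_i[OF \<open>k \<in> U\<close>] by (auto simp: row_sat_def)
    qed
    moreover obtain w d where "node_path (Node i cs') w d"
      using "2.prems"(1) wf_node_ex_path by blast
    moreover from this have "i \<in> fst ` set w" by force
    ultimately show ?thesis by blast
  qed
qed

lemma is_ddt_long_path:
  assumes ddt: "is_ddt X \<Gamma>" and attrs: "tree_At \<Gamma> \<subseteq> K"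
    and rows: "\<forall>k\<in>K. \<exists>x. (x, {k}) \<in> set (rows X) \<and> (\<forall>i\<in>K. row_val (cols X) x i = a i \<longleftrightarrow> i \<noteq> k)"
  shows "\<exists>w d. tree_path \<Gamma> w d \<and> card K \<le> length w + 1"
proof -
  obtain x where x: "\<forall>k\<in>K. (x k, {k}) \<in> set (rows X) \<and> (\<forall>i\<in>K. row_val (cols X) (x k) i = a i \<longleftrightarrow> i \<noteq> k)"
    using rows by metis
  obtain c where \<Gamma>: "\<Gamma> = [c]" and ndt: "is_ndt X [c]" and det: "det_node c"
    using ddt by (auto simp: is_ddt_def length_Suc_conv)
  have wf: "wf_node c" using ndt by (simp add: is_ndt_def wf_tree_def)
  have "\<forall>k\<in>K. \<forall>i. attr_in c i \<longrightarrow> (row_val (cols X) (x k) i = a i \<longleftrightarrow> i \<noteq> k)"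
    using x attrs \<Gamma> by (auto simp: tree_At_def)
  moreover have "\<forall>k\<in>K. \<exists>w d. node_path c w d \<and> row_sat (cols X) (x k) w"
    using x ndt by (fastforce simp: is_ndt_def tree_path_def rows_subtable)
  ultimately obtain w d where w: "node_path c w d" "\<forall>k\<in>K - fst ` set w. row_sat (cols X) (x k) w"
    using det_node_adversary_path[OF det wf] by blast
  have path: "tree_path \<Gamma> w d" using w(1) \<Gamma> by (simp add: tree_path_def)
  have "k = d" if "k \<in> K - fst ` set w" for k
  proof -
    have row: "(x k, {k}) \<in> set (rows (subtable X w))"
      using that x w(2) by (simp add: rows_subtable)
    then have "subtable X w \<noteq> Lambda" by (auto simp: Lambda_def rows_def)
    then have "d \<in> Pi_dec (subtable X w)" using ndt path \<Gamma> unfolding is_ndt_def by blast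
    then show "k = d" using row by (force simp: mem_Pi_dec_iff)
  qed
  then have "K \<subseteq> fst ` set w \<union> {d}" by blast
  then have "card K \<le> card (fst ` set w \<union> {d})" by (intro card_mono) auto
  also have "\<dots> \<le> card (fst ` set w) + 1" using card_Un_le[of "fst ` set w" "{d}"] by simp
  also have "\<dots> \<le> length w + 1" using card_image_le[of "set w" fst] card_length[of w] by simp
  finally show ?thesis using path by blast
qed

lemma the_map_of_in_set: "k \<in> fst ` set \<alpha> \<Longrightarrow> (k, the (map_of \<alpha> k)) \<in> set \<alpha>"
  by (metis map_of_SomeD option.sel weak_map_of_SomeI imageE prod.collapse)

lemma annihilating_map_of:
  assumes "annihilating T \<alpha>" "(k, \<delta>) \<in> set \<alpha>"
  shows "the (map_of \<alpha> k) = \<delta>"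
proof -
  have "(k, the (map_of \<alpha> k)) \<in> set \<alpha>" using assms(2) by (intro the_map_of_in_set) force
  then show ?thesis using assms unfolding annihilating_def by blast
qed

lemma irreducible_ann_distinct_attrs:
  assumes "irreducible_ann T \<alpha>"
  shows "distinct (map fst \<alpha>)"
proof -
  have ann: "annihilating T \<alpha>" and irr: "\<not> (\<exists>\<beta> \<in> set (subseqs \<alpha>). length \<beta> < length \<alpha> \<and> annihilating T \<beta>)"
    using assms by (auto simp: irreducible_ann_def)
  have "annihilating T (remdups \<alpha>)"
    using ann subtable_cong_set[of "remdups \<alpha>" \<alpha> T] by (auto simp: annihilating_def Omega2_def)
  then have "length (remdups \<alpha>) = length \<alpha>"
    using irr remdups_in_subseqs length_remdups_leq[of \<alpha>] by (metis le_neq_implies_less)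
  then have "distinct \<alpha>" by simp
  moreover have "inj_on fst (set \<alpha>)"
    using ann unfolding annihilating_def inj_on_def by force
  ultimately show ?thesis by (simp add: distinct_map)
qed

lemma irreducible_ann_length_le:
  assumes "irreducible_ann T \<alpha>"
  shows "length \<alpha> \<le> card (At T)"
proof -
  have "length \<alpha> = card (fst ` set \<alpha>)"
    using irreducible_ann_distinct_attrs[OF assms] by (metis distinct_card length_map set_map)
  also have "\<dots> \<le> card (At T)"
    using assms by (intro card_mono) (auto simp: irreducible_ann_def annihilating_def Omega2_def At_def)
  finally show ?thesis .
qed

lemma G_attained:
  assumes "G T > 0"
  obtains \<alpha> where "irreducible_ann T \<alpha>" "length \<alpha> = G T"
proof -
  have ex: "\<exists>\<alpha>. irreducible_ann T \<alpha>" and G: "G T = Max {length \<alpha> | \<alpha>. irreducible_ann T \<alpha>}"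
    using assms by (auto simp: G_def split: if_splits)
  have "finite {length \<alpha> | \<alpha>. irreducible_ann T \<alpha>}"
    by (rule finite_subset[of _ "{..card (At T)}"]) (auto dest: irreducible_ann_length_le)
  then have "G T \<in> {length \<alpha> | \<alpha>. irreducible_ann T \<alpha>}"
    unfolding G using ex by (intro Max_in) auto
  then show ?thesis using that by auto
qed

definition disagreements :: "(nat \<times> bool) list \<Rightarrow> nat list \<Rightarrow> bool list \<Rightarrow> nat set" where
  "disagreements \<alpha> cs x = {k \<in> fst ` set \<alpha>. row_val cs x k \<noteq> the (map_of \<alpha> k)}"

lemma disagreements_project:
  "fst ` set \<alpha> \<subseteq> set cs' \<Longrightarrow> disagreements \<alpha> cs' (map (row_val cs x) cs') = disagreements \<alpha> cs x"
  by (auto simp: disagreements_def row_val_map)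

lemma annihilating_disagreements_nonempty:
  assumes "annihilating T \<alpha>" "p \<in> set (rows T)"
  shows "disagreements \<alpha> (cols T) (fst p) \<noteq> {}"
proof -
  have "\<not> row_sat (cols T) (fst p) \<alpha>"
    using assms by (auto simp: annihilating_def subtable_eq_Lambda_iff)
  then obtain k \<delta> where "(k, \<delta>) \<in> set \<alpha>" "row_val (cols T) (fst p) k \<noteq> \<delta>"
    by (auto simp: row_sat_def)
  then show ?thesis using annihilating_map_of[OF assms(1)] by (force simp: disagreements_def)
qed

text \<open>Deleting the letters with attribute k leaves a word that, by irreducibility, some row
  satisfies; that row can disagree with the word only at k.\<close>
lemma irreducible_ann_single_disagreement:
  assumes irr: "irreducible_ann T \<alpha>" and k: "k \<in> fst ` set \<alpha>"
  shows "\<exists>p \<in> set (rows T). disagreements \<alpha> (cols T) (fst p) = {k}"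
proof -
  have ann: "annihilating T \<alpha>" using irr by (simp add: irreducible_ann_def)
  define \<beta> where "\<beta> = filter (\<lambda>q. fst q \<noteq> k) \<alpha>"
  have "length \<beta> < length \<alpha>" unfolding \<beta>_def using k by (auto intro: length_filter_less)
  then have "\<not> annihilating T \<beta>"
    using irr filter_in_subseqs unfolding irreducible_ann_def \<beta>_def by blast
  moreover have "\<beta> \<in> Omega2 T \<and> \<not> (\<exists>i \<delta> \<sigma>. (i, \<delta>) \<in> set \<beta> \<and> (i, \<sigma>) \<in> set \<beta> \<and> \<delta> \<noteq> \<sigma>)"
    using ann by (auto simp: annihilating_def Omega2_def \<beta>_def)
  ultimately have "subtable T \<beta> \<noteq> Lambda" unfolding annihilating_def by blast
  then obtain p where p: "p \<in> set (rows T)" "row_sat (cols T) (fst p) \<beta>"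
    by (auto simp: subtable_eq_Lambda_iff)
  then have "disagreements \<alpha> (cols T) (fst p) \<subseteq> {k}"
    using annihilating_map_of[OF ann] by (fastforce simp: disagreements_def row_sat_def \<beta>_def)
  then show ?thesis using p(1) annihilating_disagreements_nonempty[OF ann p(1)] by blast
qed

definition single_query_tree :: "(nat \<times> bool) list \<Rightarrow> dtree" where
  "single_query_tree \<alpha> = map (\<lambda>(k, \<delta>). Node k [(\<not> \<delta>, Leaf k)]) \<alpha>"

lemma tree_path_single_query_tree_iff:
  "tree_path (single_query_tree \<alpha>) w d \<longleftrightarrow> (\<exists>(k, \<delta>) \<in> set \<alpha>. w = [(k, \<not> \<delta>)] \<and> d = k)"
  unfolding tree_path_def single_query_tree_def by (auto simp: split_def; blast)

lemma wf_tree_single_query_tree: "\<alpha> \<noteq> [] \<Longrightarrow> wf_tree (single_query_tree \<alpha>)"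
  by (auto simp: wf_tree_def single_query_tree_def intro: wf_node.intros)

lemma is_ndt_single_query_tree:
  assumes "X \<noteq> Lambda" "\<alpha> \<noteq> []" "fst ` set \<alpha> \<subseteq> At X"
    and "\<forall>p \<in> set (rows X). \<exists>(k, \<delta>) \<in> set \<alpha>. row_val (cols X) (fst p) k \<noteq> \<delta>"
    and "\<forall>p \<in> set (rows X). \<forall>(k, \<delta>) \<in> set \<alpha>. row_val (cols X) (fst p) k \<noteq> \<delta> \<longrightarrow> k \<in> snd p"
  shows "is_ndt X (single_query_tree \<alpha>)"
proof -
  have "tree_At (single_query_tree \<alpha>) \<subseteq> At X"
    using assms(3) by (auto simp: tree_At_def single_query_tree_def)
  moreover have "\<forall>p \<in> set (rows X). \<exists>w d. tree_path (single_query_tree \<alpha>) w d \<and> p \<in> set (rows (subtable X w))"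
    using assms(4) by (fastforce simp: tree_path_single_query_tree_iff rows_subtable row_sat_def)
  moreover have "\<forall>w d. tree_path (single_query_tree \<alpha>) w d \<longrightarrow> d \<in> Pi_dec (subtable X w)"
    using assms(5) by (fastforce simp: tree_path_single_query_tree_iff mem_Pi_dec_iff rows_subtable row_sat_def)
  ultimately show ?thesis
    using assms(1,2) wf_tree_single_query_tree by (auto simp: is_ndt_def)
qed

lemma psi_tree_single_query_tree_le:
  assumes "\<alpha> \<noteq> []" "\<forall>k \<in> fst ` set \<alpha>. \<psi> [k] \<le> n"
  shows "psi_tree \<psi> (single_query_tree \<alpha>) \<le> n"
proof (rule psi_tree_leI[OF wf_tree_single_query_tree[OF assms(1)]])
  fix w d assume "tree_path (single_query_tree \<alpha>) w d"
  then obtain k \<delta> where "(k, \<delta>) \<in> set \<alpha>" "w = [(k, \<not> \<delta>)]"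
    by (auto simp: tree_path_single_query_tree_iff)
  then show "\<psi> (map fst w) \<le> n" using assms(2) by force
qed

lemma psi_singleton_le_m_psi: "k \<in> At T \<Longrightarrow> \<psi> [k] \<le> m_psi \<psi> T"
  by (auto simp: m_psi_def At_def)

text \<open>The value {0} only keeps the decision sets nonempty: on the rows of the table of an
  annihilating word the set of disagreements is never empty.\<close>
definition disagreement_decisions :: "(nat \<times> bool) list \<Rightarrow> nat list \<Rightarrow> bool list \<Rightarrow> nat set" where
  "disagreement_decisions \<alpha> cs x =
     (if disagreements \<alpha> cs x = {} then {0} else disagreements \<alpha> cs x)"

definition disagreement_table :: "dtable \<Rightarrow> (nat \<times> bool) list \<Rightarrow> dtable" where
  "disagreement_table T \<alpha> =
     (let X = I_op (At T - fst ` set \<alpha>) T in J_op (disagreement_decisions \<alpha> (cols X)) X)"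

lemma disagreement_decisions_nonempty: "disagreement_decisions \<alpha> cs x \<noteq> {}"
  by (simp add: disagreement_decisions_def)

lemma finite_disagreement_decisions: "finite (disagreement_decisions \<alpha> cs x)"
  by (simp add: disagreement_decisions_def disagreements_def)

lemma disagreement_table_in_closure: "disagreement_table T \<alpha> \<in> closure_table T"
  unfolding closure_table_def disagreement_table_def Let_def
  using disagreement_decisions_nonempty finite_disagreement_decisions by blast

lemma cols_disagreement_table:
  assumes "fst ` set \<alpha> \<subseteq> At T" "\<alpha> \<noteq> []"
  shows "cols (disagreement_table T \<alpha>) = filter (\<lambda>i. i \<in> fst ` set \<alpha>) (cols T)"
proof -
  have "\<not> At T \<subseteq> At T - fst ` set \<alpha>" using assms by (auto simp: neq_Nil_conv)
  then show ?thesis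
    by (auto simp: disagreement_table_def cols_J_op cols_I_op At_def intro!: filter_cong)
qed

lemma rows_disagreement_table:
  assumes "fst ` set \<alpha> \<subseteq> At T" "\<alpha> \<noteq> []"
  shows "set (rows (disagreement_table T \<alpha>)) =
    (\<lambda>r. (map (row_val (cols T) r) (cols (disagreement_table T \<alpha>)), disagreement_decisions \<alpha> (cols T) r))
      ` fst ` set (rows T)"
proof -
  let ?X = "I_op (At T - fst ` set \<alpha>) T"
  have "\<not> At T \<subseteq> At T - fst ` set \<alpha>" using assms by (auto simp: neq_Nil_conv)
  moreover have "fst ` set \<alpha> \<subseteq> set (cols ?X)"
    using assms calculation by (auto simp: cols_I_op At_def)
  ultimately have "set (rows (disagreement_table T \<alpha>)) =
    (\<lambda>r. (map (row_val (cols T) r) (cols ?X), disagreement_decisions \<alpha> (cols ?X) (map (row_val (cols T) r) (cols ?X))))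
      ` fst ` set (rows T)"
    by (simp add: disagreement_table_def rows_J_op fst_rows_I_op image_image)
  also have "\<dots> = (\<lambda>r. (map (row_val (cols T) r) (cols ?X), disagreement_decisions \<alpha> (cols T) r)) ` fst ` set (rows T)"
    by (simp only: disagreement_decisions_def disagreements_project[OF \<open>fst ` set \<alpha> \<subseteq> set (cols ?X)\<close>])
  finally show ?thesis by (simp add: disagreement_table_def cols_J_op)
qed

lemma set_cols_disagreement_table:
  "fst ` set \<alpha> \<subseteq> At T \<Longrightarrow> \<alpha> \<noteq> [] \<Longrightarrow> set (cols (disagreement_table T \<alpha>)) = fst ` set \<alpha>"
  by (auto simp: At_def cols_disagreement_table)

lemma disagreement_table_neq_Lambda:
  assumes "fst ` set \<alpha> \<subseteq> At T" "\<alpha> \<noteq> []"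
  shows "disagreement_table T \<alpha> \<noteq> Lambda"
proof
  assume "disagreement_table T \<alpha> = Lambda"
  then have "set (cols (disagreement_table T \<alpha>)) = {}" by (simp add: Lambda_def cols_def)
  then show False using set_cols_disagreement_table[OF assms] assms(2) by simp
qed

lemma disagreements_disagreement_table:
  assumes "fst ` set \<alpha> \<subseteq> At T" "\<alpha> \<noteq> []"
  shows "disagreements \<alpha> (cols (disagreement_table T \<alpha>)) ` fst ` set (rows (disagreement_table T \<alpha>))
    = disagreements \<alpha> (cols T) ` fst ` set (rows T)"
proof -
  have "fst ` set \<alpha> \<subseteq> set (cols (disagreement_table T \<alpha>))"
    using set_cols_disagreement_table[OF assms] by simp
  then show ?thesis
    by (simp add: rows_disagreement_table[OF assms] image_image disagreements_project)
qed

lemma snd_rows_disagreement_table: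
  assumes "annihilating T \<alpha>" "\<alpha> \<noteq> []" "p \<in> set (rows (disagreement_table T \<alpha>))"
  shows "snd p = disagreements \<alpha> (cols (disagreement_table T \<alpha>)) (fst p)"
proof -
  have K: "fst ` set \<alpha> \<subseteq> At T" using assms(1) by (auto simp: annihilating_def Omega2_def)
  then have sub: "fst ` set \<alpha> \<subseteq> set (cols (disagreement_table T \<alpha>))"
    using set_cols_disagreement_table[OF K assms(2)] by simp
  obtain q where q: "q \<in> set (rows T)"
    and p: "p = (map (row_val (cols T) (fst q)) (cols (disagreement_table T \<alpha>)),
                 disagreement_decisions \<alpha> (cols T) (fst q))"
    using assms(3) rows_disagreement_table[OF K assms(2)] by auto
  then show ?thesis
    using annihilating_disagreements_nonempty[OF assms(1) q]
    by (simp add: disagreement_decisions_def disagreements_project[OF sub])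
qed

lemma disagreement_table_disagreements_nonempty:
  assumes ann: "annihilating T \<alpha>" and ne: "\<alpha> \<noteq> []"
    and p: "p \<in> set (rows (disagreement_table T \<alpha>))"
  shows "disagreements \<alpha> (cols (disagreement_table T \<alpha>)) (fst p) \<noteq> {}"
proof -
  have K: "fst ` set \<alpha> \<subseteq> At T" using ann by (auto simp: annihilating_def Omega2_def)
  have "disagreements \<alpha> (cols (disagreement_table T \<alpha>)) (fst p) \<in> disagreements \<alpha> (cols T) ` fst ` set (rows T)"
    unfolding disagreements_disagreement_table[OF K ne, symmetric] using p by blast
  then show ?thesis using annihilating_disagreements_nonempty[OF ann] by auto
qed

lemma disagreement_table_single_disagreement_row:
  assumes irr: "irreducible_ann T \<alpha>" and k: "k \<in> fst ` set \<alpha>"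
  shows "\<exists>x. (x, {k}) \<in> set (rows (disagreement_table T \<alpha>))
    \<and> (\<forall>i \<in> fst ` set \<alpha>. row_val (cols (disagreement_table T \<alpha>)) x i = the (map_of \<alpha> i) \<longleftrightarrow> i \<noteq> k)"
proof -
  let ?T' = "disagreement_table T \<alpha>"
  have ann: "annihilating T \<alpha>" using irr by (simp add: irreducible_ann_def)
  then have K: "fst ` set \<alpha> \<subseteq> At T" by (auto simp: annihilating_def Omega2_def)
  have ne: "\<alpha> \<noteq> []" using k by auto
  obtain q where q: "q \<in> set (rows T)" "disagreements \<alpha> (cols T) (fst q) = {k}"
    using irreducible_ann_single_disagreement[OF irr k] by blast
  have "{k} \<in> disagreements \<alpha> (cols ?T') ` fst ` set (rows ?T')"
    unfolding disagreements_disagreement_table[OF K ne] using q by force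
  then obtain p where p: "p \<in> set (rows ?T')" and dis: "disagreements \<alpha> (cols ?T') (fst p) = {k}"
    by auto
  have "snd p = {k}" using snd_rows_disagreement_table[OF ann ne p] dis by simp
  then have "(fst p, {k}) \<in> set (rows ?T')" using p by (metis prod.collapse)
  moreover have "\<forall>i \<in> fst ` set \<alpha>. row_val (cols ?T') (fst p) i = the (map_of \<alpha> i) \<longleftrightarrow> i \<noteq> k"
    using dis by (auto simp: disagreements_def)
  ultimately show ?thesis by blast
qed

lemma ex_is_ddt_disagreement_table:
  assumes ann: "annihilating T \<alpha>" and ne: "\<alpha> \<noteq> []" and "distinct (cols T)"
  shows "\<exists>\<Gamma>. is_ddt (disagreement_table T \<alpha>) \<Gamma>"
proof (rule ex_is_ddt)
  let ?T' = "disagreement_table T \<alpha>"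
  have K: "fst ` set \<alpha> \<subseteq> At T" using ann by (auto simp: annihilating_def Omega2_def)
  show "?T' \<noteq> Lambda" using disagreement_table_neq_Lambda[OF K ne] .
  show "distinct (cols ?T')" using assms(3) by (simp add: cols_disagreement_table[OF K ne])
  show "\<forall>(x, d) \<in> set (rows ?T'). length x = length (cols ?T') \<and> d \<noteq> {}"
    using rows_disagreement_table[OF K ne] disagreement_decisions_nonempty by auto
  show "\<forall>p \<in> set (rows ?T'). \<forall>q \<in> set (rows ?T'). fst p = fst q \<longrightarrow> snd p = snd q"
    using snd_rows_disagreement_table[OF ann ne] by metis
qed

lemma psi_a_disagreement_table_le:
  assumes ann: "annihilating T \<alpha>" and ne: "\<alpha> \<noteq> []" and "m_psi \<psi> T \<le> n"
  shows "psi_a \<psi> (disagreement_table T \<alpha>) \<le> n"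
proof -
  let ?T' = "disagreement_table T \<alpha>"
  have K: "fst ` set \<alpha> \<subseteq> At T" using ann by (auto simp: annihilating_def Omega2_def)
  have "\<exists>(k, \<delta>) \<in> set \<alpha>. row_val (cols ?T') (fst p) k \<noteq> \<delta>" if p: "p \<in> set (rows ?T')" for p
  proof -
    obtain k where "k \<in> disagreements \<alpha> (cols ?T') (fst p)"
      using disagreement_table_disagreements_nonempty[OF ann ne p] by blast
    then have "k \<in> fst ` set \<alpha>" "row_val (cols ?T') (fst p) k \<noteq> the (map_of \<alpha> k)"
      by (simp_all add: disagreements_def)
    then show ?thesis by (intro bexI[of _ "(k, the (map_of \<alpha> k))"]) (simp_all add: the_map_of_in_set)
  qed
  moreover have "k \<in> snd p"
    if p: "p \<in> set (rows ?T')" and k: "(k, \<delta>) \<in> set \<alpha>" "row_val (cols ?T') (fst p) k \<noteq> \<delta>" for p k \<delta>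
  proof -
    have "k \<in> disagreements \<alpha> (cols ?T') (fst p)"
      using k annihilating_map_of[OF ann k(1)] by (force simp: disagreements_def)
    then show ?thesis using snd_rows_disagreement_table[OF ann ne p] by simp
  qed
  moreover have "fst ` set \<alpha> \<subseteq> At ?T'"
    using set_cols_disagreement_table[OF K ne] by (simp add: At_def)
  ultimately have "is_ndt ?T' (single_query_tree \<alpha>)"
    using disagreement_table_neq_Lambda[OF K ne] ne by (intro is_ndt_single_query_tree) auto
  moreover have "\<forall>k \<in> fst ` set \<alpha>. \<psi> [k] \<le> n"
    using K assms(3) by (meson psi_singleton_le_m_psi order_trans subsetD)
  then have "psi_tree \<psi> (single_query_tree \<alpha>) \<le> n" by (rule psi_tree_single_query_tree_le[OF ne])
  ultimately show ?thesis using psi_a_le_psi_tree order_trans by blast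
qed

lemma psi_d_disagreement_table_ge:
  assumes "bounded_measure \<psi>" and irr: "irreducible_ann T \<alpha>" and "distinct (cols T)"
  shows "length \<alpha> - 1 \<le> psi_d \<psi> (disagreement_table T \<alpha>)"
proof (cases "\<alpha> = []")
  case False
  let ?T' = "disagreement_table T \<alpha>" and ?K = "fst ` set \<alpha>"
  have ann: "annihilating T \<alpha>" using irr by (simp add: irreducible_ann_def)
  then have K: "?K \<subseteq> At T" by (auto simp: annihilating_def Omega2_def)
  have "length \<alpha> - 1 \<le> psi_tree \<psi> \<Gamma>" if ddt: "is_ddt ?T' \<Gamma>" for \<Gamma>
  proof -
    have "tree_At \<Gamma> \<subseteq> ?K"
      using ddt set_cols_disagreement_table[OF K False] by (simp add: is_ddt_def is_ndt_def At_def)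
    then obtain w d where path: "tree_path \<Gamma> w d" and card: "card ?K \<le> length w + 1"
      using is_ddt_long_path[OF ddt _ ballI[OF disagreement_table_single_disagreement_row[OF irr]]]
      by blast
    have "length \<alpha> = card ?K"
      using irreducible_ann_distinct_attrs[OF irr] by (metis distinct_card length_map set_map)
    also have "\<dots> - 1 \<le> length w" using card by simp
    also have "\<dots> \<le> \<psi> (map fst w)"
      using assms(1) unfolding bounded_measure_def by (metis length_map)
    also have "\<dots> \<le> psi_tree \<psi> \<Gamma>"
      using ddt path by (intro le_psi_tree) (auto simp: is_ddt_def is_ndt_def)
    finally show ?thesis .
  qed
  then show ?thesis
    using le_psi_d disagreement_table_neq_Lambda[OF K False] ex_is_ddt_disagreement_table[OF ann False assms(3)]
    by blast
qed simp

theorem lemma13: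
  fixes A :: "dtable set" and \<psi> :: "nat list \<Rightarrow> nat" and n :: nat and T :: dtable
  assumes "closed_class A" and "nontrivial A" and "bounded_measure \<psi>"
    and "T \<in> A_psi A \<psi> n" and "G T > 0"
  shows "\<exists>T' \<in> closure_table T. psi_a \<psi> T' \<le> n \<and> psi_d \<psi> T' \<ge> G T - 1"
proof -
  have T: "T \<in> A" "m_psi \<psi> T \<le> n" using assms(4) by (auto simp: A_psi_def)
  then have distinct: "distinct (cols T)" using assms(1) by (auto simp: closed_class_def wf_table_def)
  obtain \<alpha> where irr: "irreducible_ann T \<alpha>" and len: "length \<alpha> = G T"
    using G_attained[OF assms(5)] by blast
  have ann: "annihilating T \<alpha>" using irr by (simp add: irreducible_ann_def)
  have "\<alpha> \<noteq> []" using len assms(5) by auto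
  show ?thesis
  proof (rule bexI[OF _ disagreement_table_in_closure], intro conjI)
    show "psi_a \<psi> (disagreement_table T \<alpha>) \<le> n"
      using psi_a_disagreement_table_le[OF ann \<open>\<alpha> \<noteq> []\<close> T(2)] .
    show "G T - 1 \<le> psi_d \<psi> (disagreement_table T \<alpha>)"
      using psi_d_disagreement_table_ge[OF assms(3) irr distinct] len by simp
  qed
qed

end
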